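(* Let $\mathbb{G}$ be a graph as described in the context and let $\lambda$ be a finite nonnegative Borel measure on $\mathbb{G}$. Then for any exponents $1\le p<q<\infty$ and all Borel probability measures $\mu,\nu$ on $\mathbb{G}$, $$\hat{\mathcal{S}}_p(\mu,\nu) \le \big[\lambda(\mathbb{G})(1+\lambda(\mathbb{G}))\big]^{\frac1p-\frac1q}\,\hat{\mathcal{S}}_q(\mu,\nu).$$
   Context: $\mathbb{G}=(V,E)$ is a connected, undirected graph with $V \subset \mathbb{R}^n$, where each edge is the line segment joining its endpoints and has positive length $w_e$; $\mathbb{G}$ is identified with the set of all nodes and all points of all edges, with the Euclidean-induced topology, and carries the shortest-path metric $d_{\mathbb{G}}$. There is a fixed root node $z_0\in V$ such that for every $x\in\mathbb{G}$ the shortest path $[z_0,x]$ is unique. For $x\in\mathbb{G}$ let $\Lambda(x) := \{y\in\mathbb{G} : x\in[z_0,y]\}$. For $1\le r\le\infty$, a continuous $f:\mathbb{G}\to\mathbb{R}$ belongs to $W^{1,r}(\mathbb{G},\lambda)$ if there is $h\in L^r(\mathbb{G},\lambda)$ with $f(x)-f(z_0) = \int_{[z_0,x]} h\,d\lambda$ for all $x$; this $h$ is unique and denoted $f'$; $W^{1,r}_0(\mathbb{G},\lambda)$ consists of those $f$ with $f(z_0)=0$. The weight is $\hat w(x) := 1+\lambda(\Lambda(x))$, and $\|g\|_{L^r_{\hat w}} := (\int \hat w|g|^r\,d\lambda)^{1/r}$ for $r<\infty$ ($\lambda$-essential sup of $|g|$ for $r=\infty$). For $1\le s\le\infty$ with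 conjugate exponent $s'$, the regularized Sobolev IPM is $$\hat{\mathcal{S}}_s(\mu,\nu) := \sup\left\{ \left|\int f\,d\mu - \int f\,d\nu\right| : f\in W^{1,s'}_0(\mathbb{G},\lambda),\ \|f'\|_{L^{s'}_{\hat w}}\le 1\right\}.$$ *)

theory Defs
  imports "HOL-Analysis.Analysis" "HOL-Probability.Essential_Supremum" "HOL-Probability.Probability_Measure"
begin

definition graph_pts :: "'a::euclidean_space set \<Rightarrow> 'a set set \<Rightarrow> 'a set" where
  "graph_pts V E = V \<union> \<Union>{closed_segment a b | a b. {a, b} \<in> E}"

definition is_walk :: "'a set set \<Rightarrow> 'a list \<Rightarrow> bool" where
  "is_walk E vs \<longleftrightarrow> vs \<noteq> [] \<and> (\<forall>i. Suc i < length vs \<longrightarrow> {vs ! i, vs ! Suc i} \<in> E)"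

definition is_graph :: "'a::euclidean_space set \<Rightarrow> 'a set set \<Rightarrow> ('a set \<Rightarrow> real) \<Rightarrow> 'a \<Rightarrow> bool" where
  "is_graph V E w z0 \<longleftrightarrow>
     finite V \<and> z0 \<in> V \<and>
     (\<forall>e\<in>E. \<exists>a b. a \<in> V \<and> b \<in> V \<and> a \<noteq> b \<and> e = {a, b}) \<and>
     (\<forall>e\<in>E. w e > 0) \<and>
     (\<forall>a b c d. {a, b} \<in> E \<longrightarrow> {c, d} \<in> E \<longrightarrow> {a, b} \<noteq> {c, d} \<longrightarrow>
        closed_segment a b \<inter> closed_segment c d \<subseteq> {a, b} \<inter> {c, d}) \<and>
     (\<forall>v\<in>V. \<exists>vs. is_walk E vs \<and> hd vs = z0 \<and> last vs = v)"

text \<open>A route from z0 to x: a walk vs from z0 followed by a portion (fraction t)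
of an edge {last vs, u}; or ending exactly at the vertex last vs (u = last vs, t = 0).\<close>

definition is_route :: "'a::euclidean_space set set \<Rightarrow> 'a \<Rightarrow> 'a \<Rightarrow> 'a list \<times> 'a \<times> real \<Rightarrow> bool" where
  "is_route E z0 x r \<longleftrightarrow> (case r of (vs, u, t) \<Rightarrow>
     is_walk E vs \<and> hd vs = z0 \<and>
     ((u = last vs \<and> t = 0) \<or> ({last vs, u} \<in> E \<and> 0 \<le> t \<and> t \<le> 1)) \<and>
     x = last vs + t *\<^sub>R (u - last vs))"

definition route_len :: "('a set \<Rightarrow> real) \<Rightarrow> 'a list \<times> 'a \<times> real \<Rightarrow> real" where
  "route_len w r = (case r of (vs, u, t) \<Rightarrow>
     (\<Sum>i<length vs - 1. w {vs ! i, vs ! Suc i}) + t * w {last vs, u})"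

definition route_trace :: "'a::euclidean_space list \<times> 'a \<times> real \<Rightarrow> 'a set" where
  "route_trace r = (case r of (vs, u, t) \<Rightarrow>
     (\<Union>i<length vs - 1. closed_segment (vs ! i) (vs ! Suc i))
     \<union> closed_segment (last vs) (last vs + t *\<^sub>R (u - last vs)))"

definition gdist :: "'a::euclidean_space set set \<Rightarrow> ('a set \<Rightarrow> real) \<Rightarrow> 'a \<Rightarrow> 'a \<Rightarrow> real" where
  "gdist E w z0 x = Inf (route_len w ` {r. is_route E z0 x r})"

definition is_shortest_path :: "'a::euclidean_space set set \<Rightarrow> ('a set \<Rightarrow> real) \<Rightarrow> 'a \<Rightarrow> 'a \<Rightarrow> 'a set \<Rightarrow> bool" where
  "is_shortest_path E w z0 x S \<longleftrightarrow>
     (\<exists>r. is_route E z0 x r \<and> route_len w r = gdist E w z0 x \<and> S = route_trace r)"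

text \<open>The shortest path [z0, x] (meaningful when it is unique).\<close>
definition spath :: "'a::euclidean_space set set \<Rightarrow> ('a set \<Rightarrow> real) \<Rightarrow> 'a \<Rightarrow> 'a \<Rightarrow> 'a set" where
  "spath E w z0 x = (THE S. is_shortest_path E w z0 x S)"

definition subtree :: "'a::euclidean_space set \<Rightarrow> 'a set set \<Rightarrow> ('a set \<Rightarrow> real) \<Rightarrow> 'a \<Rightarrow> 'a \<Rightarrow> 'a set" where
  "subtree V E w z0 x = {y \<in> graph_pts V E. x \<in> spath E w z0 y}"

definition hat_w :: "'a::euclidean_space set \<Rightarrow> 'a set set \<Rightarrow> ('a set \<Rightarrow> real) \<Rightarrow> 'a \<Rightarrow> 'a measure \<Rightarrow> 'a \<Rightarrow> real" where
  "hat_w V E w z0 lam x = 1 + measure lam (subtree V E w z0 x)"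

definition in_Lr :: "'a measure \<Rightarrow> ereal \<Rightarrow> ('a \<Rightarrow> real) \<Rightarrow> bool" where
  "in_Lr lam r h \<longleftrightarrow> h \<in> borel_measurable lam \<and>
     (if r = \<infinity> then (\<exists>C. AE x in lam. \<bar>h x\<bar> \<le> C)
      else integrable lam (\<lambda>x. \<bar>h x\<bar> powr real_of_ereal r))"

definition wnorm :: "'a::euclidean_space set \<Rightarrow> 'a set set \<Rightarrow> ('a set \<Rightarrow> real) \<Rightarrow> 'a \<Rightarrow> 'a measure \<Rightarrow> ereal \<Rightarrow> ('a \<Rightarrow> real) \<Rightarrow> ereal" where
  "wnorm V E w z0 lam r g =
     (if r = \<infinity> then esssup lam (\<lambda>x. ereal \<bar>g x\<bar>)
      else ereal ((\<integral>x. hat_w V E w z0 lam x * \<bar>g x\<bar> powr real_of_ereal r \<partial>lam)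
                  powr (1 / real_of_ereal r)))"

definition is_W1_deriv :: "'a::euclidean_space set \<Rightarrow> 'a set set \<Rightarrow> ('a set \<Rightarrow> real) \<Rightarrow> 'a \<Rightarrow> 'a measure \<Rightarrow> ereal \<Rightarrow> ('a \<Rightarrow> real) \<Rightarrow> ('a \<Rightarrow> real) \<Rightarrow> bool" where
  "is_W1_deriv V E w z0 lam r f h \<longleftrightarrow>
     continuous_on (graph_pts V E) f \<and> in_Lr lam r h \<and>
     (\<forall>x\<in>graph_pts V E. f x - f z0 = (LINT y:spath E w z0 x|lam. h y))"

definition conj_exp :: "real \<Rightarrow> ereal" where
  "conj_exp s = (if s = 1 then \<infinity> else ereal (s / (s - 1)))"

definition reg_sobolev_ipm :: "'a::euclidean_space set \<Rightarrow> 'a set set \<Rightarrow> ('a set \<Rightarrow> real) \<Rightarrow> 'a \<Rightarrow> 'a measure \<Rightarrow> real \<Rightarrow> 'a measure \<Rightarrow> 'a measure \<Rightarrow> ereal" where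
  "reg_sobolev_ipm V E w z0 lam s \<mu> \<nu> =
     Sup {ereal \<bar>(\<integral>x. f x \<partial>\<mu>) - (\<integral>x. f x \<partial>\<nu>)\<bar> | f.
            f z0 = 0 \<and>
            (\<exists>h. is_W1_deriv V E w z0 lam (conj_exp s) f h \<and>
                 wnorm V E w z0 lam (conj_exp s) h \<le> 1)}"

end

theory Submission
  imports Defs
begin

(*
  For p < q the conjugate exponents satisfy q' < p' (with p' = \<infinity> when p = 1).  Since
  1 \<le> \<hat>w \<le> 1 + \<lambda>(G), the concave tangent-line bound
  y powr \<theta> \<le> M powr (1 - \<theta>) * (\<theta> * y + (1 - \<theta>) / M), with \<theta> = q'/p' and
  M = \<lambda>(G) (1 + \<lambda>(G)), integrates to  \<integral> \<hat>w |h|^q' \<le> M^(1 - q'/p')  whenever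
  \<integral> \<hat>w |h|^p' \<le> 1.  As (1/p - 1/q) q' = 1 - q'/p', dividing a test function of the
  p-unit ball by M^(1/p - 1/q) yields one of the q-unit ball, which gives the inequality.
  If \<lambda>(G) = 0, every test function vanishes on G.
*)

lemma powr_le_tangent_line:
  fixes y \<theta> M :: real
  assumes "0 \<le> y" "0 < \<theta>" "\<theta> < 1" "0 < M"
  shows "y powr \<theta> \<le> M powr (1 - \<theta>) * (\<theta> * y + (1 - \<theta>) / M)"
proof (cases "y = 0")
  case True
  then show ?thesis using assms by simp
next
  case False
  with assms have "y powr \<theta> * (1 / M) powr (1 - \<theta>) \<le> \<theta> * y + (1 - \<theta>) * (1 / M)"
    by (intro Youngs_inequality_0) auto
  then have "M powr (1 - \<theta>) * (y powr \<theta> * (1 / M) powr (1 - \<theta>))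
               \<le> M powr (1 - \<theta>) * (\<theta> * y + (1 - \<theta>) / M)"
    by (intro mult_left_mono) auto
  moreover have "M powr (1 - \<theta>) * (1 / M) powr (1 - \<theta>) = 1"
    using assms by (simp add: powr_divide flip: powr_mult)
  ultimately show ?thesis
    by (simp add: algebra_simps)
qed

lemma (in finite_measure) integrable_abs_powr_lower_exponent:
  fixes h :: "'a \<Rightarrow> real"
  assumes "0 < s" "s \<le> r" "h \<in> borel_measurable M"
    and "integrable M (\<lambda>x. \<bar>h x\<bar> powr r)"
  shows "integrable M (\<lambda>x. \<bar>h x\<bar> powr s)"
proof (rule Bochner_Integration.integrable_bound)
  show "integrable M (\<lambda>x. 1 + \<bar>h x\<bar> powr r)"
    using assms(4) by simp
  show "(\<lambda>x. \<bar>h x\<bar> powr s) \<in> borel_measurable M"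
    using assms(3) by measurable
  have "\<bar>h x\<bar> powr s \<le> 1 + \<bar>h x\<bar> powr r" for x
  proof (cases "\<bar>h x\<bar> \<le> 1")
    case True
    then have "\<bar>h x\<bar> powr s \<le> 1"
      using assms(1) by (intro powr_le1) auto
    then show ?thesis
      using powr_ge_zero[of "\<bar>h x\<bar>" r] by linarith
  next
    case False
    then have "\<bar>h x\<bar> powr s \<le> \<bar>h x\<bar> powr r"
      using assms(2) by (intro powr_mono) auto
    then show ?thesis
      by simp
  qed
  then show "AE x in M. norm (\<bar>h x\<bar> powr s) \<le> norm (1 + \<bar>h x\<bar> powr r)"
    by simp
qed

lemma in_Lr_lower_exponent:
  assumes "finite_measure lam" "in_Lr lam r h" "0 < s" "ereal s \<le> r"
  shows "in_Lr lam (ereal s) h"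
proof -
  interpret finite_measure lam by fact
  have hm: "h \<in> borel_measurable lam"
    using assms(2) by (simp add: in_Lr_def)
  show ?thesis
  proof (cases r)
    case (real r')
    then show ?thesis
      using assms hm by (auto simp: in_Lr_def intro: integrable_abs_powr_lower_exponent)
  next
    case PInf
    then obtain C where "AE x in lam. \<bar>h x\<bar> \<le> C"
      using assms(2) by (auto simp: in_Lr_def)
    then have "AE x in lam. norm (\<bar>h x\<bar> powr s) \<le> \<bar>C\<bar> powr s"
      by eventually_elim (use assms(3) in \<open>auto intro!: powr_mono2\<close>)
    then show ?thesis
      using hm by (auto simp: in_Lr_def intro!: integrable_const_bound)
  next
    case MInf
    then show ?thesis using assms(4) by simp
  qed
qed

lemma conj_exp_strict_antimono:
  assumes "1 \<le> p" "p < q"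
  shows "conj_exp q < conj_exp p"
  using assms by (auto simp: conj_exp_def field_simps)

lemma hat_w_ge_1: "1 \<le> hat_w V E w z0 lam x"
  by (simp add: hat_w_def)

lemma hat_w_le:
  assumes "finite_measure lam"
  shows "hat_w V E w z0 lam x \<le> 1 + measure lam (space lam)"
  using finite_measure.bounded_measure[OF assms] by (simp add: hat_w_def)

lemma wnorm_le_1_iff:
  assumes "0 < r"
  shows "wnorm V E w z0 lam (ereal r) g \<le> 1
           \<longleftrightarrow> (\<integral>x. hat_w V E w z0 lam x * \<bar>g x\<bar> powr r \<partial>lam) \<le> 1"
proof -
  have "0 \<le> (\<integral>x. hat_w V E w z0 lam x * \<bar>g x\<bar> powr r \<partial>lam)"
    by (intro integral_nonneg_AE AE_I2 mult_nonneg_nonneg order_trans[OF _ hat_w_ge_1]) auto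
  moreover have "0 \<le> I \<Longrightarrow> I powr (1 / r) \<le> 1 \<longleftrightarrow> I \<le> 1" for I :: real
    using assms by (metis gr_one_powr linorder_not_less order_less_le powr01_less_one
        powr_eq_0_iff powr_one_eq_one zero_less_divide_1_iff)
  ultimately show ?thesis
    by (simp add: wnorm_def)
qed

lemma wnorm_infinity_le_1:
  assumes "wnorm V E w z0 lam \<infinity> g \<le> 1"
  shows "AE x in lam. \<bar>g x\<bar> \<le> 1"
  using esssup_AE[of "\<lambda>x. ereal \<bar>g x\<bar>" lam]
proof eventually_elim
  case (elim x)
  then show ?case
    using assms order_trans[of "ereal \<bar>g x\<bar>" _ 1] by (simp add: wnorm_def)
qed

lemma (in finite_measure) integral_weighted_abs_powr_le:
  fixes W h :: "'a \<Rightarrow> real" and r s B :: real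
  defines "K \<equiv> measure M (space M) * B"
  assumes W: "\<And>x. 0 \<le> W x \<and> W x \<le> B"
    and s: "0 < s" "s < r"
    and h: "h \<in> borel_measurable M" "integrable M (\<lambda>x. \<bar>h x\<bar> powr r)"
    and unit: "(\<integral>x. W x * \<bar>h x\<bar> powr r \<partial>M) \<le> 1"
    and K: "0 < K"
  shows "(\<integral>x. W x * \<bar>h x\<bar> powr s \<partial>M) \<le> K powr (1 - s / r)"
proof (cases "integrable M (\<lambda>x. W x * \<bar>h x\<bar> powr s)")
  case False
  then show ?thesis
    by (simp add: not_integrable_integral_eq)
next
  case int_s: True
  define \<theta> where "\<theta> = s / r"
  have \<theta>: "0 < \<theta>" "\<theta> < 1"
    using s by (auto simp: \<theta>_def)
  \<comment> \<open>W itself need not be measurable; measurability of the r-th moment comes from the s-th.\<close>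
  have moment_factor: "W x * \<bar>h x\<bar> powr r = (W x * \<bar>h x\<bar> powr s) * \<bar>h x\<bar> powr (r - s)" for x
    by (cases "h x = 0") (auto simp: mult.assoc simp flip: powr_add)
  have int_r: "integrable M (\<lambda>x. W x * \<bar>h x\<bar> powr r)"
  proof (rule Bochner_Integration.integrable_bound)
    show "integrable M (\<lambda>x. B * \<bar>h x\<bar> powr r)"
      using h(2) by simp
    show "(\<lambda>x. W x * \<bar>h x\<bar> powr r) \<in> borel_measurable M"
      unfolding moment_factor using int_s h(1) by measurable
    show "AE x in M. norm (W x * \<bar>h x\<bar> powr r) \<le> norm (B * \<bar>h x\<bar> powr r)"
      using W by (intro AE_I2) (simp add: abs_mult mult_right_mono order_trans[OF _ abs_ge_self])
  qed
  have pointwise: "W x * \<bar>h x\<bar> powr s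
                     \<le> K powr (1 - \<theta>) * (\<theta> * (W x * \<bar>h x\<bar> powr r) + (1 - \<theta>) * B / K)" for x
  proof -
    have "\<bar>h x\<bar> powr s = (\<bar>h x\<bar> powr r) powr \<theta>"
      using s by (simp add: powr_powr \<theta>_def)
    also have "\<dots> \<le> K powr (1 - \<theta>) * (\<theta> * \<bar>h x\<bar> powr r + (1 - \<theta>) / K)"
      using \<theta> K by (intro powr_le_tangent_line) auto
    finally have "W x * \<bar>h x\<bar> powr s \<le> W x * (K powr (1 - \<theta>) * (\<theta> * \<bar>h x\<bar> powr r + (1 - \<theta>) / K))"
      using W by (intro mult_left_mono) auto
    also have "\<dots> = K powr (1 - \<theta>) * (\<theta> * (W x * \<bar>h x\<bar> powr r) + (1 - \<theta>) * W x / K)"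
      by (simp add: algebra_simps)
    also have "\<dots> \<le> K powr (1 - \<theta>) * (\<theta> * (W x * \<bar>h x\<bar> powr r) + (1 - \<theta>) * B / K)"
      using W \<theta> K by (intro mult_left_mono add_left_mono divide_right_mono) auto
    finally show ?thesis .
  qed
  have "(\<integral>x. W x * \<bar>h x\<bar> powr s \<partial>M)
          \<le> (\<integral>x. K powr (1 - \<theta>) * (\<theta> * (W x * \<bar>h x\<bar> powr r) + (1 - \<theta>) * B / K) \<partial>M)"
    using int_s int_r pointwise by (intro integral_mono) auto
  also have "\<dots> = K powr (1 - \<theta>)
                   * (\<theta> * (\<integral>x. W x * \<bar>h x\<bar> powr r \<partial>M) + (1 - \<theta>) * B / K * measure M (space M))"
    using int_r by (simp add: mult.commute)
  also have "(1 - \<theta>) * B / K * measure M (space M) = 1 - \<theta>"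
    using K by (auto simp: K_def)
  also have "K powr (1 - \<theta>) * (\<theta> * (\<integral>x. W x * \<bar>h x\<bar> powr r \<partial>M) + (1 - \<theta>))
               \<le> K powr (1 - \<theta>) * (\<theta> * 1 + (1 - \<theta>))"
    using unit \<theta> by (intro mult_left_mono add_right_mono) auto
  finally show ?thesis
    by (simp add: \<theta>_def)
qed

lemma (in finite_measure) integral_weighted_abs_powr_le_of_bounded:
  fixes W h :: "'a \<Rightarrow> real" and s B :: real
  assumes W: "\<And>x. 0 \<le> W x \<and> W x \<le> B"
    and s: "0 \<le> s"
    and h: "AE x in M. \<bar>h x\<bar> \<le> 1"
  shows "(\<integral>x. W x * \<bar>h x\<bar> powr s \<partial>M) \<le> measure M (space M) * B"
proof (cases "integrable M (\<lambda>x. W x * \<bar>h x\<bar> powr s)")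
  case False
  moreover have "0 \<le> B"
    using W order_trans by blast
  ultimately show ?thesis
    by (simp add: not_integrable_integral_eq)
next
  case True
  have "AE x in M. W x * \<bar>h x\<bar> powr s \<le> B"
    using h
  proof eventually_elim
    case (elim x)
    then have "\<bar>h x\<bar> powr s \<le> 1"
      using s by (intro powr_le1) auto
    then show ?case
      using W[of x] by (metis mult_left_mono mult.right_neutral order_trans)
  qed
  then have "(\<integral>x. W x * \<bar>h x\<bar> powr s \<partial>M) \<le> (\<integral>x. B \<partial>M)"
    using True by (intro integral_mono_AE) auto
  then show ?thesis
    by (simp add: mult.commute)
qed

lemma weighted_integral_conj_exp_le:
  fixes p q :: real and h :: "'a::euclidean_space \<Rightarrow> real" and lam :: "'a measure"
  defines "A \<equiv> measure lam (space lam)"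
  assumes lam: "finite_measure lam" "0 < A"
    and pq: "1 \<le> p" "p < q"
    and h: "in_Lr lam (conj_exp p) h" "wnorm V E w z0 lam (conj_exp p) h \<le> 1"
  shows "(\<integral>x. hat_w V E w z0 lam x * \<bar>h x\<bar> powr (q / (q - 1)) \<partial>lam)
           \<le> (A * (1 + A)) powr ((1 / p - 1 / q) * (q / (q - 1)))"
proof -
  interpret finite_measure lam by fact
  define q' where "q' = q / (q - 1)"
  have q': "0 < q'"
    using pq by (simp add: q'_def)
  have W: "0 \<le> hat_w V E w z0 lam x \<and> hat_w V E w z0 lam x \<le> 1 + A" for x
    using hat_w_ge_1 hat_w_le[OF lam(1)] order_trans zero_le_one unfolding A_def by blast
  have mass: "0 < A * (1 + A)"
    using lam(2) by simp
  have "(\<integral>x. hat_w V E w z0 lam x * \<bar>h x\<bar> powr q' \<partial>lam)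
          \<le> (A * (1 + A)) powr ((1 / p - 1 / q) * q')"
  proof (cases "p = 1")
    case True
    then have "AE x in lam. \<bar>h x\<bar> \<le> 1"
      using h(2) by (intro wnorm_infinity_le_1) (simp add: conj_exp_def)
    then have "(\<integral>x. hat_w V E w z0 lam x * \<bar>h x\<bar> powr q' \<partial>lam) \<le> A * (1 + A)"
      using W q' unfolding A_def by (intro integral_weighted_abs_powr_le_of_bounded) auto
    moreover have "(1 / p - 1 / q) * q' = 1"
      using True pq by (simp add: q'_def field_simps)
    ultimately show ?thesis
      by simp
  next
    case False
    define p' where "p' = p / (p - 1)"
    have p': "conj_exp p = ereal p'" "q' < p'"
      using False pq by (auto simp: conj_exp_def p'_def q'_def field_simps)
    have "(\<integral>x. hat_w V E w z0 lam x * \<bar>h x\<bar> powr q' \<partial>lam) \<le> (A * (1 + A)) powr (1 - q' / p')"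
      unfolding A_def
    proof (rule integral_weighted_abs_powr_le)
      show "integrable lam (\<lambda>x. \<bar>h x\<bar> powr p')" "h \<in> borel_measurable lam"
        using h(1) by (simp_all add: in_Lr_def p')
      show "(\<integral>x. hat_w V E w z0 lam x * \<bar>h x\<bar> powr p' \<partial>lam) \<le> 1"
        using h(2) q' p' by (simp add: wnorm_le_1_iff)
    qed (use W q' p' mass in \<open>auto simp: A_def\<close>)
    moreover have "(1 / p - 1 / q) * q' = 1 - q' / p'"
      using False pq by (simp add: q'_def p'_def field_simps)
    ultimately show ?thesis
      by simp
  qed
  then show ?thesis
    by (simp only: q'_def)
qed

definition sobolev_unit_ball ::
    "'a::euclidean_space set \<Rightarrow> 'a set set \<Rightarrow> ('a set \<Rightarrow> real) \<Rightarrow> 'a \<Rightarrow> 'a measure \<Rightarrow> real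
       \<Rightarrow> ('a \<Rightarrow> real) set" where
  "sobolev_unit_ball V E w z0 lam s =
     {f. f z0 = 0 \<and> (\<exists>h. is_W1_deriv V E w z0 lam (conj_exp s) f h \<and>
                         wnorm V E w z0 lam (conj_exp s) h \<le> 1)}"

lemma reg_sobolev_ipm_eq_SUP:
  "reg_sobolev_ipm V E w z0 lam s \<mu> \<nu> =
     (SUP f\<in>sobolev_unit_ball V E w z0 lam s. ereal \<bar>(\<integral>x. f x \<partial>\<mu>) - (\<integral>x. f x \<partial>\<nu>)\<bar>)"
  unfolding reg_sobolev_ipm_def sobolev_unit_ball_def by (simp add: setcompr_eq_image)

lemma is_W1_deriv_divide:
  assumes "is_W1_deriv V E w z0 lam r f h"
  shows "is_W1_deriv V E w z0 lam r (\<lambda>x. f x / C) (\<lambda>x. h x / C)"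
  unfolding is_W1_deriv_def
proof (intro conjI ballI)
  show "continuous_on (graph_pts V E) (\<lambda>x. f x / C)"
    using assms unfolding divide_inverse by (intro continuous_intros) (auto simp: is_W1_deriv_def)
  have "h \<in> borel_measurable lam"
    using assms by (simp add: is_W1_deriv_def in_Lr_def)
  then have hm: "(\<lambda>x. h x / C) \<in> borel_measurable lam"
    by measurable
  show "in_Lr lam r (\<lambda>x. h x / C)"
  proof (cases "r = \<infinity>")
    case True
    then obtain B where "AE x in lam. \<bar>h x\<bar> \<le> B"
      using assms by (auto simp: is_W1_deriv_def in_Lr_def)
    then have "AE x in lam. \<bar>h x / C\<bar> \<le> B / \<bar>C\<bar>"
      by eventually_elim (simp add: abs_divide divide_right_mono)
    then show ?thesis
      using True hm by (auto simp: in_Lr_def)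
  next
    case False
    have "\<bar>h x / C\<bar> powr real_of_ereal r = \<bar>h x\<bar> powr real_of_ereal r / \<bar>C\<bar> powr real_of_ereal r" for x
      by (simp add: abs_divide powr_divide)
    then show ?thesis
      using False hm assms by (simp add: in_Lr_def is_W1_deriv_def)
  qed
  fix x assume "x \<in> graph_pts V E"
  then show "f x / C - f z0 / C = (LINT y:spath E w z0 x|lam. h y / C)"
    using assms by (simp add: is_W1_deriv_def set_lebesgue_integral_def flip: diff_divide_distrib)
qed

lemma reg_sobolev_ipm_le_scaled:
  assumes C: "0 < C"
    and ball: "\<And>f. f \<in> sobolev_unit_ball V E w z0 lam s
                 \<Longrightarrow> (\<lambda>x. f x / C) \<in> sobolev_unit_ball V E w z0 lam t"
  shows "reg_sobolev_ipm V E w z0 lam s \<mu> \<nu> \<le> ereal C * reg_sobolev_ipm V E w z0 lam t \<mu> \<nu>"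
  unfolding reg_sobolev_ipm_eq_SUP
proof (rule SUP_least)
  fix f assume f: "f \<in> sobolev_unit_ball V E w z0 lam s"
  have "ereal \<bar>(\<integral>x. f x \<partial>\<mu>) - (\<integral>x. f x \<partial>\<nu>)\<bar>
          = ereal C * ereal \<bar>(\<integral>x. f x / C \<partial>\<mu>) - (\<integral>x. f x / C \<partial>\<nu>)\<bar>"
    using C by (simp add: abs_divide flip: diff_divide_distrib)
  also have "\<dots> \<le> ereal C * (SUP g\<in>sobolev_unit_ball V E w z0 lam t. ereal \<bar>(\<integral>x. g x \<partial>\<mu>) - (\<integral>x. g x \<partial>\<nu>)\<bar>)"
    using ball[OF f] C by (intro ereal_mult_left_mono SUP_upper) auto
  finally show "ereal \<bar>(\<integral>x. f x \<partial>\<mu>) - (\<integral>x. f x \<partial>\<nu>)\<bar>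
                  \<le> ereal C * (SUP g\<in>sobolev_unit_ball V E w z0 lam t. ereal \<bar>(\<integral>x. g x \<partial>\<mu>) - (\<integral>x. g x \<partial>\<nu>)\<bar>)" .
qed

lemma sobolev_unit_ball_vanishes_if_null:
  assumes "f \<in> sobolev_unit_ball V E w z0 lam s" "emeasure lam (space lam) = 0"
    and "x \<in> graph_pts V E"
  shows "f x = 0"
proof -
  obtain h where f: "f z0 = 0" "is_W1_deriv V E w z0 lam (conj_exp s) f h"
    using assms(1) by (auto simp: sobolev_unit_ball_def)
  have "AE y in lam. False"
    using assms(2) by (intro AE_I[of _ _ "space lam"]) auto
  then have "(LINT y:spath E w z0 x|lam. h y) = 0"
    unfolding set_lebesgue_integral_def by (intro integral_eq_zero_AE) auto
  with f assms(3) show ?thesis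
    by (simp add: is_W1_deriv_def)
qed

lemma reg_sobolev_ipm_le_0_if_null:
  assumes "emeasure lam (space lam) = 0"
    and "space \<mu> = graph_pts V E" "space \<nu> = graph_pts V E"
  shows "reg_sobolev_ipm V E w z0 lam s \<mu> \<nu> \<le> 0"
  unfolding reg_sobolev_ipm_eq_SUP
proof (rule SUP_least)
  fix f assume "f \<in> sobolev_unit_ball V E w z0 lam s"
  then have "\<And>x. x \<in> graph_pts V E \<Longrightarrow> f x = 0"
    using assms(1) by (rule sobolev_unit_ball_vanishes_if_null)
  then have "(\<integral>x. f x \<partial>\<mu>) = 0" "(\<integral>x. f x \<partial>\<nu>) = 0"
    using assms(2,3) by (auto intro!: integral_eq_zero_AE AE_I2)
  then show "ereal \<bar>(\<integral>x. f x \<partial>\<mu>) - (\<integral>x. f x \<partial>\<nu>)\<bar> \<le> 0"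
    by simp
qed

lemma sobolev_unit_ball_divide_subset:
  fixes p q :: real and lam :: "'a::euclidean_space measure"
  defines "A \<equiv> measure lam (space lam)"
  assumes lam: "finite_measure lam" "0 < A"
    and pq: "1 \<le> p" "p < q"
    and f: "f \<in> sobolev_unit_ball V E w z0 lam p"
  shows "(\<lambda>x. f x / (A * (1 + A)) powr (1 / p - 1 / q)) \<in> sobolev_unit_ball V E w z0 lam q"
proof -
  define C where "C = (A * (1 + A)) powr (1 / p - 1 / q)"
  define q' where "q' = q / (q - 1)"
  have C: "0 < C" and q': "0 < q'" "conj_exp q = ereal q'"
    using lam pq by (auto simp: C_def q'_def conj_exp_def)
  obtain h where h: "f z0 = 0" "is_W1_deriv V E w z0 lam (conj_exp p) f h"
    "wnorm V E w z0 lam (conj_exp p) h \<le> 1"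
    using f by (auto simp: sobolev_unit_ball_def)
  have "in_Lr lam (conj_exp q) h"
    unfolding q'(2) using h(2) lam(1) q' conj_exp_strict_antimono[OF pq]
    by (intro in_Lr_lower_exponent[where r = "conj_exp p"]) (auto simp: is_W1_deriv_def)
  then have "is_W1_deriv V E w z0 lam (conj_exp q) f h"
    using h(2) by (simp add: is_W1_deriv_def)
  then have deriv: "is_W1_deriv V E w z0 lam (conj_exp q) (\<lambda>x. f x / C) (\<lambda>x. h x / C)"
    by (rule is_W1_deriv_divide)
  have "(\<integral>x. hat_w V E w z0 lam x * \<bar>h x / C\<bar> powr q' \<partial>lam)
          = (\<integral>x. hat_w V E w z0 lam x * \<bar>h x\<bar> powr q' \<partial>lam) / C powr q'"
    using C by (simp add: abs_divide powr_divide flip: integral_divide_zero)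
  also have "\<dots> \<le> 1"
  proof -
    have "(\<integral>x. hat_w V E w z0 lam x * \<bar>h x\<bar> powr q' \<partial>lam) \<le> (A * (1 + A)) powr ((1 / p - 1 / q) * q')"
      using weighted_integral_conj_exp_le[OF lam[unfolded A_def] pq] h(2,3)
      unfolding q'_def A_def by (simp add: is_W1_deriv_def)
    also have "\<dots> = C powr q'"
      by (simp add: C_def powr_powr)
    finally show ?thesis
      using C by simp
  qed
  finally have "wnorm V E w z0 lam (conj_exp q) (\<lambda>x. h x / C) \<le> 1"
    unfolding q'(2) using q' by (simp add: wnorm_le_1_iff)
  then show ?thesis
    using deriv h(1) by (auto simp: sobolev_unit_ball_def C_def)
qed

theorem proposition4p4:
  fixes V :: "'a::euclidean_space set" and E :: "'a set set" and w :: "'a set \<Rightarrow> real"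
    and z0 :: 'a and lam \<mu> \<nu> :: "'a measure" and p q :: real
  assumes graph: "is_graph V E w z0"
    and unique_paths: "\<forall>x\<in>graph_pts V E. \<exists>!S. is_shortest_path E w z0 x S"
    and lam_sets: "sets lam = sets (restrict_space borel (graph_pts V E))"
    and lam_fin: "finite_measure lam"
    and mu_sets: "sets \<mu> = sets (restrict_space borel (graph_pts V E))"
    and mu_prob: "prob_space \<mu>"
    and nu_sets: "sets \<nu> = sets (restrict_space borel (graph_pts V E))"
    and nu_prob: "prob_space \<nu>"
    and p: "1 \<le> p" and pq: "p < q"
  shows "reg_sobolev_ipm V E w z0 lam p \<mu> \<nu>
         \<le> ereal ((measure lam (graph_pts V E) * (1 + measure lam (graph_pts V E))) powr (1/p - 1/q))
           * reg_sobolev_ipm V E w z0 lam q \<mu> \<nu>"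
proof -
  interpret finite_measure lam by fact
  have space: "space lam = graph_pts V E" "space \<mu> = graph_pts V E" "space \<nu> = graph_pts V E"
    using lam_sets mu_sets nu_sets by (auto dest!: sets_eq_imp_space_eq simp: space_restrict_space)
  show ?thesis
  proof (cases "measure lam (space lam) = 0")
    case True
    then have "reg_sobolev_ipm V E w z0 lam p \<mu> \<nu> \<le> 0"
      using space by (intro reg_sobolev_ipm_le_0_if_null) (auto simp: emeasure_eq_measure)
    then show ?thesis
      using True space(1) by (simp flip: zero_ereal_def)
  next
    case False
    define A where "A = measure lam (space lam)"
    have A: "0 < A"
      using False by (simp add: A_def zero_less_measure_iff)
    have "reg_sobolev_ipm V E w z0 lam p \<mu> \<nu>
            \<le> ereal ((A * (1 + A)) powr (1 / p - 1 / q)) * reg_sobolev_ipm V E w z0 lam q \<mu> \<nu>"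
    proof (rule reg_sobolev_ipm_le_scaled)
      show "0 < (A * (1 + A)) powr (1 / p - 1 / q)"
        using A by simp
      show "(\<lambda>x. f x / (A * (1 + A)) powr (1 / p - 1 / q)) \<in> sobolev_unit_ball V E w z0 lam q"
        if "f \<in> sobolev_unit_ball V E w z0 lam p" for f
        using sobolev_unit_ball_divide_subset[OF lam_fin _ p pq that] A by (simp add: A_def)
    qed
    then show ?thesis
      by (simp add: A_def space(1))
  qed
qed

end
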